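(* For $t\in\bar\tau_\delta=\{0,\delta,\dots,T\}$ let $v^t$ be the value function at time $t$ and $v_h^t$ its approximation given by the ideal max-plus finite element method. Then \[ \|v_h^T-v^T\|_\infty\leq\Big(1+\frac T\delta\Big)\sup_{t\in\bar\tau_\delta}\Big(\|P^{-\mathcal Z_h}(v^t)-v^t\|_\infty+\|P_{\mathcal W_h}(v^t)-v^t\|_\infty\Big). \]
   Context: Optimal control setting: $X\subseteq\mathbb{R}^n$, $U\subseteq\mathbb{R}^m$, $\ell:X\times U\to\mathbb R$, $f:X\times U\to\mathbb{R}^n$, $T>0$, $\phi:X\to\mathbb{R}\cup\{-\infty\}$. For $t\ge0$ and $g:X\to\overline{\mathbb R}$, $S^tg(x)=\sup\{\int_0^t\ell(\mathbf x(s),\mathbf u(s))ds+g(\mathbf x(t))\}$ over measurable $\mathbf u:[0,t]\to U$ and absolutely continuous $\mathbf x:[0,t]\to X$ with $\dot{\mathbf x}=f(\mathbf x,\mathbf u)$ a.e. and $\mathbf x(0)=x$; value function $v^t=S^t\phi$. Arithmetic in $\overline{\mathbb R}=\mathbb{R}\cup\{\pm\infty\}$ with $-\infty$ absorbing for $+$; $a\backslash b=\max\{\lambda\in\overline{\mathbb{R}}:a+\lambda\leq b\}$. $\langle u,v\rangle=\sup_{x\in X}(u(x)+v(x))$. Finite elements $w_1,\dots,w_p$ and test functions $z_1,\dots,z_q$, functions $X\to\mathbb{R}\cup\{-\infty\}$. $W_h\lambda=\sup_i(w_i+\lambda_i)$; $(W_h\backslash g)_i=\inf_{x\in X}(w_i(x)\backslash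 g(x))$; $P_{\mathcal W_h}g=W_h(W_h\backslash g)$; $P^{-\mathcal Z_h}g(x)=\min_j\big(z_j(x)\backslash\langle z_j,g\rangle\big)$. For a matrix $A$: $(A\lambda)_j=\max_k(A_{jk}+\lambda_k)$, $(A\backslash\mu)_i=\min_jA_{ji}\backslash\mu_j$. Ideal max-plus finite element method: $N\geq1$, $\delta=T/N$, $(M_h)_{ji}=\langle z_j,w_i\rangle$, $(K_h)_{ji}=\langle z_j,S^\delta w_i\rangle$, $\lambda^0=W_h\backslash\phi$, $\lambda^{t+\delta}=M_h\backslash(K_h\lambda^t)$, $v_h^t=W_h\lambda^t$. For $u,v:X\to\overline{\mathbb R}$, $\|u-v\|_\infty=\inf\{\lambda\geq0: v-\lambda\leq u\leq v+\lambda\}$ (equal to $\sup_x|u(x)-v(x)|$ when $u-v$ is finite-valued). *)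

theory Defs
  imports "HOL-Analysis.Analysis"
begin

definition mp_plus :: "ereal \<Rightarrow> ereal \<Rightarrow> ereal" (infixl "\<oplus>" 65) where
  "a \<oplus> b = (if a = -\<infinity> \<or> b = -\<infinity> then -\<infinity> else a + b)"

text \<open>Residuation a\b = max{lambda : a + lambda <= b} (the maximum exists, so it is the Sup).\<close>
definition mp_res :: "ereal \<Rightarrow> ereal \<Rightarrow> ereal" where
  "mp_res a b = Sup {l. a \<oplus> l \<le> b}"

definition pairing :: "'x set \<Rightarrow> ('x \<Rightarrow> ereal) \<Rightarrow> ('x \<Rightarrow> ereal) \<Rightarrow> ereal" where
  "pairing X u v = (SUP x\<in>X. u x \<oplus> v x)"

definition sup_dist :: "'x set \<Rightarrow> ('x \<Rightarrow> ereal) \<Rightarrow> ('x \<Rightarrow> ereal) \<Rightarrow> ereal" where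
  "sup_dist X u v = Inf {l. 0 \<le> l \<and> (\<forall>x\<in>X. v x \<oplus> (- l) \<le> u x \<and> u x \<le> v x \<oplus> l)}"

definition abs_cont_on :: "real \<Rightarrow> (real \<Rightarrow> 'a::real_normed_vector) \<Rightarrow> bool" where
  "abs_cont_on t x \<longleftrightarrow>
     (\<forall>e>0. \<exists>d>0. \<forall>(n::nat) (a::nat \<Rightarrow> real) b.
        (\<forall>k<n. 0 \<le> a k \<and> a k \<le> b k \<and> b k \<le> t) \<and>
        (\<forall>k<n. \<forall>j<n. k \<noteq> j \<longrightarrow> {a k<..<b k} \<inter> {a j<..<b j} = {}) \<and>
        (\<Sum>k<n. b k - a k) < d
        \<longrightarrow> (\<Sum>k<n. norm (x (b k) - x (a k))) < e)"

text \<open>Admissible control/trajectory pairs on [0,t] starting at x0. We additionally require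
  the running cost to be Lebesgue integrable on [0,t], so that the integral is meaningful.\<close>
definition admissible ::
  "('x::euclidean_space) set \<Rightarrow> ('u::euclidean_space) set \<Rightarrow> ('x \<Rightarrow> 'u \<Rightarrow> real)
   \<Rightarrow> ('x \<Rightarrow> 'u \<Rightarrow> 'x) \<Rightarrow> real \<Rightarrow> 'x \<Rightarrow> (real \<Rightarrow> 'u) \<Rightarrow> (real \<Rightarrow> 'x) \<Rightarrow> bool" where
  "admissible X U lc f t x0 u xx \<longleftrightarrow>
     u \<in> borel_measurable (lebesgue_on {0..t}) \<and> (\<forall>s\<in>{0..t}. u s \<in> U) \<and>
     abs_cont_on t xx \<and> (\<forall>s\<in>{0..t}. xx s \<in> X) \<and> xx 0 = x0 \<and>
     (AE s in lebesgue_on {0..t}. (xx has_vector_derivative f (xx s) (u s)) (at s within {0..t})) \<and>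
     set_integrable lborel {0..t} (\<lambda>s. lc (xx s) (u s))"

definition S_op ::
  "('x::euclidean_space) set \<Rightarrow> ('u::euclidean_space) set \<Rightarrow> ('x \<Rightarrow> 'u \<Rightarrow> real)
   \<Rightarrow> ('x \<Rightarrow> 'u \<Rightarrow> 'x) \<Rightarrow> real \<Rightarrow> ('x \<Rightarrow> ereal) \<Rightarrow> 'x \<Rightarrow> ereal" where
  "S_op X U lc f t g x0 =
     (SUP (u, xx) \<in> {(u, xx). admissible X U lc f t x0 u xx}.
        ereal (set_lebesgue_integral lborel {0..t} (\<lambda>s. lc (xx s) (u s))) \<oplus> g (xx t))"

definition W_op :: "nat \<Rightarrow> (nat \<Rightarrow> 'x \<Rightarrow> ereal) \<Rightarrow> (nat \<Rightarrow> ereal) \<Rightarrow> 'x \<Rightarrow> ereal" where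
  "W_op p w lam x = (SUP i\<in>{..<p}. w i x \<oplus> lam i)"

definition W_res :: "'x set \<Rightarrow> (nat \<Rightarrow> 'x \<Rightarrow> ereal) \<Rightarrow> ('x \<Rightarrow> ereal) \<Rightarrow> nat \<Rightarrow> ereal" where
  "W_res X w g i = (INF x\<in>X. mp_res (w i x) (g x))"

definition proj_W :: "'x set \<Rightarrow> nat \<Rightarrow> (nat \<Rightarrow> 'x \<Rightarrow> ereal) \<Rightarrow> ('x \<Rightarrow> ereal) \<Rightarrow> 'x \<Rightarrow> ereal" where
  "proj_W X p w g = W_op p w (W_res X w g)"

definition proj_Z :: "'x set \<Rightarrow> nat \<Rightarrow> (nat \<Rightarrow> 'x \<Rightarrow> ereal) \<Rightarrow> ('x \<Rightarrow> ereal) \<Rightarrow> 'x \<Rightarrow> ereal" where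
  "proj_Z X q z g x = (INF j\<in>{..<q}. mp_res (z j x) (pairing X (z j) g))"

definition mat_apply :: "nat \<Rightarrow> (nat \<Rightarrow> nat \<Rightarrow> ereal) \<Rightarrow> (nat \<Rightarrow> ereal) \<Rightarrow> nat \<Rightarrow> ereal" where
  "mat_apply p A lam j = (SUP k\<in>{..<p}. A j k \<oplus> lam k)"

definition mat_res :: "nat \<Rightarrow> (nat \<Rightarrow> nat \<Rightarrow> ereal) \<Rightarrow> (nat \<Rightarrow> ereal) \<Rightarrow> nat \<Rightarrow> ereal" where
  "mat_res q A mu i = (INF j\<in>{..<q}. mp_res (A j i) (mu j))"

text \<open>Coefficient vectors of the ideal max-plus finite element method, lambda^{k delta}.\<close>
fun mpfem_coeffs ::
  "('x::euclidean_space) set \<Rightarrow> ('u::euclidean_space) set \<Rightarrow> ('x \<Rightarrow> 'u \<Rightarrow> real)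
   \<Rightarrow> ('x \<Rightarrow> 'u \<Rightarrow> 'x) \<Rightarrow> ('x \<Rightarrow> ereal) \<Rightarrow> nat \<Rightarrow> (nat \<Rightarrow> 'x \<Rightarrow> ereal)
   \<Rightarrow> nat \<Rightarrow> (nat \<Rightarrow> 'x \<Rightarrow> ereal) \<Rightarrow> real \<Rightarrow> nat \<Rightarrow> nat \<Rightarrow> ereal" where
  "mpfem_coeffs X U lc f \<phi> p w q z \<delta> 0 = W_res X w \<phi>"
| "mpfem_coeffs X U lc f \<phi> p w q z \<delta> (Suc k) =
     mat_res q (\<lambda>j i. pairing X (z j) (w i))
       (mat_apply p (\<lambda>j i. pairing X (z j) (S_op X U lc f \<delta> (w i)))
          (mpfem_coeffs X U lc f \<phi> p w q z \<delta> k))"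

end

theory Submission
  imports Defs
begin

(* The coefficient update lambda^{t+delta} = M_h \ (K_h lambda^t) realises the iteration
   v_h^{t+delta} = P_W (P^{-Z} (S^delta v_h^t)), because S^delta commutes with max-plus linear
   combinations and residuation turns suprema into infima. The value function satisfies
   v^{t+delta} = S^delta v^t (dynamic programming principle, proved by concatenating and splitting
   trajectories). The three operators S^delta, P_W and P^{-Z} are monotone and commute with adding
   constants, hence are nonexpansive for the sup-norm. Each step therefore adds at most the
   projection error ||P_W P^{-Z} v^t - v^t|| <= ||P^{-Z} v^t - v^t|| + ||P_W v^t - v^t|| to the
   error of the previous step; together with the initial error
   ||S^delta (P_W phi) - S^delta phi|| <= ||P_W v^0 - v^0|| this gives 1 + T/delta such terms. *)

section \<open>Max-plus arithmetic\<close>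

lemma lower_bounds_eqI:
  fixes x y :: "'a::order"
  assumes "\<And>l. l \<le> x \<longleftrightarrow> l \<le> y"
  shows "x = y"
  using assms by (metis order.antisym order.refl)

lemma mp_plus_simps [simp]:
  "a \<oplus> -\<infinity> = -\<infinity>" "-\<infinity> \<oplus> a = -\<infinity>" "a \<oplus> 0 = a" "0 \<oplus> a = a"
  "ereal r \<oplus> ereal s = ereal (r + s)"
  by (auto simp: mp_plus_def)

lemma mp_plus_commute: "a \<oplus> b = b \<oplus> a"
  by (auto simp: mp_plus_def add.commute)

lemma mp_plus_assoc: "(a \<oplus> b) \<oplus> c = a \<oplus> (b \<oplus> c)"
  by (cases a; cases b; cases c) (auto simp: mp_plus_def)

lemma mp_plus_mono: "a \<le> b \<Longrightarrow> c \<le> d \<Longrightarrow> a \<oplus> c \<le> b \<oplus> d"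
  by (cases a; cases b; cases c; cases d) (auto simp: mp_plus_def)

lemma le_mp_plus_ereal_iff: "x \<le> y \<oplus> ereal c \<longleftrightarrow> x \<oplus> ereal (- c) \<le> y"
  by (cases x; cases y) (auto simp: mp_plus_def)

lemma mp_plus_Sup: "a \<oplus> Sup B = Sup ((\<oplus>) a ` B)"
proof (rule order.antisym)
  show "Sup ((\<oplus>) a ` B) \<le> a \<oplus> Sup B"
    by (auto intro!: Sup_least mp_plus_mono Sup_upper)
  show "a \<oplus> Sup B \<le> Sup ((\<oplus>) a ` B)"
  proof (cases "a = -\<infinity> \<or> Sup B = -\<infinity>")
    case False
    then obtain b where b: "b \<in> B" "b \<noteq> -\<infinity>"
      unfolding Sup_eq_MInfty by blast
    show ?thesis
    proof (cases a)
      case PInf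
      then have "a \<oplus> b = \<infinity>"
        using b by (cases b) (auto simp: mp_plus_def)
      then have "\<infinity> \<le> Sup ((\<oplus>) a ` B)"
        using b by (metis SUP_upper)
      then show ?thesis by simp
    next
      case (real r)
      have "a \<oplus> Sup B = a + Sup B"
        using False by (simp add: mp_plus_def)
      also have "\<dots> = (SUP x\<in>B. a + x)"
        using SUP_ereal_add_right[of B a "\<lambda>x. x"] b(1) real by force
      also have "\<dots> = Sup ((\<oplus>) a ` B)"
        using real by (intro SUP_cong) (auto simp: mp_plus_def)
      finally show ?thesis by simp
    qed (use False in auto)
  qed auto
qed

lemma mp_plus_SUP: "a \<oplus> (SUP i\<in>I. f i) = (SUP i\<in>I. a \<oplus> f i)"
  using mp_plus_Sup[of a "f ` I"] by (simp add: image_image)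

lemma SUP_mp_plus: "(SUP i\<in>I. f i) \<oplus> a = (SUP i\<in>I. f i \<oplus> a)"
  using mp_plus_SUP[of a f I] by (simp add: mp_plus_commute)

lemma INF_mp_plus_ereal: "(INF i\<in>I. f i) \<oplus> ereal c = (INF i\<in>I. f i \<oplus> ereal c)"
  by (rule lower_bounds_eqI) (simp add: le_mp_plus_ereal_iff le_INF_iff)

lemma le_mp_res_iff: "l \<le> mp_res a b \<longleftrightarrow> a \<oplus> l \<le> b"
proof
  assume "l \<le> mp_res a b"
  then have "a \<oplus> l \<le> a \<oplus> mp_res a b"
    by (auto intro: mp_plus_mono)
  also have "\<dots> = Sup ((\<oplus>) a ` {l. a \<oplus> l \<le> b})"
    unfolding mp_res_def by (rule mp_plus_Sup)
  also have "\<dots> \<le> b"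
    by (auto intro: Sup_least)
  finally show "a \<oplus> l \<le> b" .
qed (auto simp: mp_res_def intro: Sup_upper)

lemma mp_res_mono: "b \<le> c \<Longrightarrow> mp_res a b \<le> mp_res a c"
  by (meson le_mp_res_iff order.refl order.trans)

lemma mp_res_INF: "mp_res a (INF i\<in>I. c i) = (INF i\<in>I. mp_res a (c i))"
  by (rule lower_bounds_eqI) (simp add: le_mp_res_iff le_INF_iff)

lemma mp_res_SUP: "mp_res (SUP i\<in>I. a i) c = (INF i\<in>I. mp_res (a i) c)"
  by (rule lower_bounds_eqI) (simp add: le_mp_res_iff le_INF_iff SUP_mp_plus SUP_le_iff)

lemma mp_res_mp_res: "mp_res a (mp_res b c) = mp_res (b \<oplus> a) c"
  by (rule lower_bounds_eqI) (simp add: le_mp_res_iff mp_plus_assoc)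

lemma mp_res_mp_plus_ereal: "mp_res a (b \<oplus> ereal c) = mp_res a b \<oplus> ereal c"
  by (rule lower_bounds_eqI) (simp add: le_mp_res_iff le_mp_plus_ereal_iff mp_plus_assoc)

lemma mp_plus_ereal_le_iff: "ereal c \<oplus> y \<le> z \<longleftrightarrow> y \<le> z \<oplus> ereal (- c)"
  by (simp add: le_mp_plus_ereal_iff mp_plus_commute)

section \<open>The sup-norm distance\<close>

lemma le_Inf_add_Inf_ereal:
  fixes A B :: "ereal set"
  assumes A_nonneg: "\<And>a. a \<in> A \<Longrightarrow> 0 \<le> a" and B_nonneg: "\<And>b. b \<in> B \<Longrightarrow> 0 \<le> b"
    and le_sum: "\<And>a b. a \<in> A \<Longrightarrow> b \<in> B \<Longrightarrow> c \<le> a + b"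
  shows "c \<le> Inf A + Inf B"
proof (cases "A = {} \<or> B = {}")
  case True
  moreover have "0 \<le> Inf A" "0 \<le> Inf B"
    using A_nonneg B_nonneg by (auto intro: Inf_greatest)
  ultimately show ?thesis
    by (auto simp: top_ereal_def)
next
  case False
  have "c \<le> (INF p\<in>A \<times> B. fst p + snd p)"
    using le_sum by (force intro: INF_greatest)
  also have "\<dots> = Inf (fst ` (A \<times> B)) + Inf (snd ` (A \<times> B))"
    using A_nonneg B_nonneg by (intro INF_ereal_add_directed) force+
  also have "\<dots> = Inf A + Inf B"
    using False by simp
  finally show ?thesis .
qed

definition uniformly_close :: "'x set \<Rightarrow> ('x \<Rightarrow> ereal) \<Rightarrow> ('x \<Rightarrow> ereal) \<Rightarrow> ereal \<Rightarrow> bool" where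
  "uniformly_close X u v l \<longleftrightarrow> (\<forall>x\<in>X. v x \<oplus> - l \<le> u x \<and> u x \<le> v x \<oplus> l)"

lemma sup_dist_eq_Inf_uniformly_close:
  "sup_dist X u v = Inf {l. 0 \<le> l \<and> uniformly_close X u v l}"
  unfolding sup_dist_def uniformly_close_def ..

lemma sup_dist_le: "0 \<le> l \<Longrightarrow> uniformly_close X u v l \<Longrightarrow> sup_dist X u v \<le> l"
  unfolding sup_dist_eq_Inf_uniformly_close by (auto intro: Inf_lower)

lemma sup_dist_nonneg: "0 \<le> sup_dist X u v"
  unfolding sup_dist_def by (auto intro: Inf_greatest)

lemma sup_dist_self: "sup_dist X u u = 0"
  using sup_dist_le[of 0 X u u] sup_dist_nonneg[of X u u] by (simp add: uniformly_close_def)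

lemma sup_dist_cong:
  "(\<And>x. x \<in> X \<Longrightarrow> u x = u' x) \<Longrightarrow> (\<And>x. x \<in> X \<Longrightarrow> v x = v' x) \<Longrightarrow>
   sup_dist X u v = sup_dist X u' v'"
  unfolding sup_dist_def by (intro arg_cong[where f = Inf]) auto

lemma uniformly_close_trans:
  assumes uv: "uniformly_close X u v a" and vw: "uniformly_close X v w b"
    and "0 \<le> a" "0 \<le> b"
  shows "uniformly_close X u w (a + b)"
  unfolding uniformly_close_def
proof (intro ballI conjI)
  fix x assume "x \<in> X"
  then have "(w x \<oplus> - b) \<oplus> - a \<le> u x" "u x \<le> (w x \<oplus> b) \<oplus> a"
    using uv vw unfolding uniformly_close_def by (meson mp_plus_mono order.refl order_trans)+
  moreover have "(w x \<oplus> - b) \<oplus> - a = w x \<oplus> - (a + b)" "(w x \<oplus> b) \<oplus> a = w x \<oplus> (a + b)"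
    using \<open>0 \<le> a\<close> \<open>0 \<le> b\<close> by (cases a; cases b; cases "w x"; simp add: mp_plus_def)+
  ultimately show "w x \<oplus> - (a + b) \<le> u x" "u x \<le> w x \<oplus> (a + b)"
    by simp_all
qed

lemma sup_dist_triangle: "sup_dist X u w \<le> sup_dist X u v + sup_dist X v w"
  unfolding sup_dist_eq_Inf_uniformly_close[of X u v] sup_dist_eq_Inf_uniformly_close[of X v w]
  by (rule le_Inf_add_Inf_ereal) (auto intro: sup_dist_le uniformly_close_trans)

definition monotone_homogeneous_on :: "'x set \<Rightarrow> (('x \<Rightarrow> ereal) \<Rightarrow> 'x \<Rightarrow> ereal) \<Rightarrow> bool" where
  "monotone_homogeneous_on X F \<longleftrightarrow>
     (\<forall>g h. (\<forall>x\<in>X. g x \<le> h x) \<longrightarrow> (\<forall>x\<in>X. F g x \<le> F h x)) \<and>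
     (\<forall>g c. \<forall>x\<in>X. F (\<lambda>y. g y \<oplus> ereal c) x = F g x \<oplus> ereal c)"

lemma monotone_homogeneous_onI:
  assumes "\<And>g h x. \<forall>x\<in>X. g x \<le> h x \<Longrightarrow> x \<in> X \<Longrightarrow> F g x \<le> F h x"
    and "\<And>g c x. x \<in> X \<Longrightarrow> F (\<lambda>y. g y \<oplus> ereal c) x = F g x \<oplus> ereal c"
  shows "monotone_homogeneous_on X F"
  using assms unfolding monotone_homogeneous_on_def by blast

lemma monotone_homogeneous_on_nonexpansive:
  assumes "monotone_homogeneous_on X F"
  shows "sup_dist X (F g) (F h) \<le> sup_dist X g h"
  unfolding sup_dist_eq_Inf_uniformly_close[of X g h]
proof (rule Inf_greatest, clarify)
  have mono: "\<And>g h x. \<forall>x\<in>X. g x \<le> h x \<Longrightarrow> x \<in> X \<Longrightarrow> F g x \<le> F h x"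
    and homogeneous: "\<And>g c x. x \<in> X \<Longrightarrow> F (\<lambda>y. g y \<oplus> ereal c) x = F g x \<oplus> ereal c"
    using assms unfolding monotone_homogeneous_on_def by blast+
  fix l assume "0 \<le> l" and close: "uniformly_close X g h l"
  show "sup_dist X (F g) (F h) \<le> l"
  proof (cases l)
    case (real r)
    have "uniformly_close X (F g) (F h) l"
      unfolding uniformly_close_def
    proof (intro ballI conjI)
      fix x assume "x \<in> X"
      have "F h x \<oplus> - l = F (\<lambda>y. h y \<oplus> - l) x"
        using homogeneous[OF \<open>x \<in> X\<close>, of h "- r"] real by simp
      also have "\<dots> \<le> F g x"
        using close \<open>x \<in> X\<close> by (intro mono) (auto simp: uniformly_close_def)
      finally show "F h x \<oplus> - l \<le> F g x" .
      have "F g x \<le> F (\<lambda>y. h y \<oplus> l) x"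
        using close \<open>x \<in> X\<close> by (intro mono) (auto simp: uniformly_close_def)
      also have "\<dots> = F h x \<oplus> l"
        using homogeneous[OF \<open>x \<in> X\<close>, of h r] real by simp
      finally show "F g x \<le> F h x \<oplus> l" .
    qed
    then show ?thesis
      using \<open>0 \<le> l\<close> by (rule sup_dist_le[rotated])
  qed (use \<open>0 \<le> l\<close> in auto)
qed

lemma sup_dist_comp_le:
  assumes "monotone_homogeneous_on X F"
  shows "sup_dist X (F (G v)) v \<le> sup_dist X (G v) v + sup_dist X (F v) v"
proof -
  have "sup_dist X (F (G v)) v \<le> sup_dist X (F (G v)) (F v) + sup_dist X (F v) v"
    by (rule sup_dist_triangle)
  also have "\<dots> \<le> sup_dist X (G v) v + sup_dist X (F v) v"
    using monotone_homogeneous_on_nonexpansive[OF assms] by (rule add_right_mono)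
  finally show ?thesis .
qed

lemma ereal_of_nat_Suc_mult: "ereal (real (Suc n)) * e = ereal (real n) * e + e"
  using ereal_left_distrib[of "ereal (real n)" 1 e] by (simp add: one_ereal_def add.commute)

lemma ereal_le_linear_growth:
  fixes a :: "nat \<Rightarrow> ereal"
  assumes "a 0 \<le> e" and "\<And>k. k < n \<Longrightarrow> a (Suc k) \<le> a k + e"
  shows "a n \<le> ereal (real (Suc n)) * e"
  using assms(2)
proof (induction n)
  case 0
  then show ?case
    using assms(1) by simp
next
  case (Suc n)
  have "a (Suc n) \<le> a n + e"
    using Suc.prems by simp
  also have "\<dots> \<le> ereal (real (Suc n)) * e + e"
    using Suc by (intro add_right_mono) simp
  finally show ?case
    by (simp only: ereal_of_nat_Suc_mult[of "Suc n"])
qed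

lemma sup_dist_iteration_error:
  fixes S P :: "('x \<Rightarrow> ereal) \<Rightarrow> 'x \<Rightarrow> ereal" and H V :: "nat \<Rightarrow> 'x \<Rightarrow> ereal"
  assumes S_nonexpansive: "\<And>g h. sup_dist X (S g) (S h) \<le> sup_dist X g h"
    and P_nonexpansive: "\<And>g h. sup_dist X (P g) (P h) \<le> sup_dist X g h"
    and H_Suc: "\<And>k. H (Suc k) = P (S (H k))"
    and V_Suc: "\<And>k x. x \<in> X \<Longrightarrow> V (Suc k) x = S (V k) x"
    and initial_error: "sup_dist X (S (H 0)) (V (Suc 0)) \<le> e"
    and P_error: "\<And>k. 1 \<le> k \<Longrightarrow> k \<le> n \<Longrightarrow> sup_dist X (P (V k)) (V k) \<le> e"
    and "1 \<le> n"
  shows "sup_dist X (H n) (V n) \<le> ereal (real (Suc n)) * e"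
proof -
  have step: "sup_dist X (H (Suc k)) (V (Suc k)) \<le> sup_dist X (S (H k)) (V (Suc k)) + e"
    if "Suc k \<le> n" for k
  proof -
    have "sup_dist X (H (Suc k)) (V (Suc k))
        \<le> sup_dist X (P (S (H k))) (P (V (Suc k))) + sup_dist X (P (V (Suc k))) (V (Suc k))"
      unfolding H_Suc by (rule sup_dist_triangle)
    also have "\<dots> \<le> sup_dist X (S (H k)) (V (Suc k)) + e"
      using that by (intro add_mono P_nonexpansive P_error) auto
    finally show ?thesis .
  qed
  obtain m where "n = Suc m"
    using \<open>1 \<le> n\<close> by (cases n) auto
  have "sup_dist X (S (H m)) (V (Suc m)) \<le> ereal (real (Suc m)) * e"
  proof (rule ereal_le_linear_growth[where a = "\<lambda>k. sup_dist X (S (H k)) (V (Suc k))"])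
    fix k assume "k < m"
    have "sup_dist X (S (H (Suc k))) (V (Suc (Suc k))) = sup_dist X (S (H (Suc k))) (S (V (Suc k)))"
      by (rule sup_dist_cong) (simp_all add: V_Suc)
    also have "\<dots> \<le> sup_dist X (H (Suc k)) (V (Suc k))"
      by (rule S_nonexpansive)
    also have "\<dots> \<le> sup_dist X (S (H k)) (V (Suc k)) + e"
      using \<open>k < m\<close> \<open>n = Suc m\<close> by (intro step) simp
    finally show "sup_dist X (S (H (Suc k))) (V (Suc (Suc k)))
        \<le> sup_dist X (S (H k)) (V (Suc k)) + e" .
  qed (rule initial_error)
  then have "sup_dist X (S (H m)) (V (Suc m)) + e \<le> ereal (real (Suc m)) * e + e"
    by (rule add_right_mono)
  with step[of m] show ?thesis
    unfolding \<open>n = Suc m\<close> ereal_of_nat_Suc_mult[of "Suc m"] by simp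
qed

section \<open>Translation, restriction and gluing of trajectories\<close>

lemma AE_lebesgue_translate:
  fixes c :: real
  assumes "AE x in lebesgue. P x"
  shows "AE x in lebesgue. P (x + c)"
proof -
  obtain N where N: "N \<in> null_sets lebesgue" "{x. \<not> P x} \<subseteq> N"
    using assms unfolding eventually_ae_filter by auto
  have "negligible N"
    using N(1) negligible_iff_null_sets by blast
  then have "(+) (- c) ` N \<in> null_sets lebesgue"
    using negligible_translation negligible_iff_null_sets by blast
  moreover have "{x. \<not> P (x + c)} \<subseteq> (+) (- c) ` N"
    using N(2) by (auto intro!: rev_image_eqI[where x = "_ + c"])
  ultimately show ?thesis
    unfolding eventually_ae_filter by auto
qed

lemma AE_has_vector_derivative_Icc_iff:
  fixes a b :: real
  shows "(AE s in lebesgue_on {a..b}. (x has_vector_derivative F s) (at s within {a..b})) \<longleftrightarrow>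
         (AE s in lebesgue. s \<in> {a<..<b} \<longrightarrow> (x has_vector_derivative F s) (at s))"
proof -
  have within_iff:
    "(x has_vector_derivative F s) (at s within {a..b}) \<longleftrightarrow> (x has_vector_derivative F s) (at s)"
    if "s \<in> {a<..<b}" for s
  proof -
    have "at s within {a..b} = at s"
      using that by (intro at_within_interior) simp
    then show ?thesis by simp
  qed
  have "AE s in lebesgue. s \<noteq> a \<and> s \<noteq> b"
    using AE_lborel_singleton[of a] AE_lborel_singleton[of b] by (auto intro: AE_completion)
  then have "AE s in lebesgue.
      (s \<in> {a..b} \<longrightarrow> (x has_vector_derivative F s) (at s within {a..b})) \<longleftrightarrow>
      (s \<in> {a<..<b} \<longrightarrow> (x has_vector_derivative F s) (at s))"
    by (elim eventually_mono)
       (metis within_iff atLeastAtMost_iff greaterThanLessThan_iff order_less_imp_le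
         order.not_eq_order_implies_strict)
  then show ?thesis
    by (subst AE_restrict_space_iff) (auto intro: AE_cong)
qed

lemma has_vector_derivative_translate:
  fixes x :: "real \<Rightarrow> 'a::real_normed_vector"
  assumes "(x has_vector_derivative V) (at (r + c))"
  shows "((\<lambda>s. x (s + c)) has_vector_derivative V) (at r)"
proof -
  have "((\<lambda>s. s + c) has_vector_derivative 1) (at r)"
    by (auto intro!: derivative_eq_intros)
  from vector_diff_chain_at[OF this assms] show ?thesis
    by (simp add: o_def)
qed

lemma borel_measurable_lebesgue_on_translate:
  fixes g :: "real \<Rightarrow> 'b::euclidean_space"
  assumes "g \<in> borel_measurable (lebesgue_on {a..b})"
  shows "(\<lambda>x. g (x + c)) \<in> borel_measurable (lebesgue_on {a - c..b - c})"
proof -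
  let ?G = "\<lambda>x. if x \<in> {a..b} then g x else 0"
  have "?G \<in> borel_measurable lebesgue"
    using assms by (intro borel_measurable_if[THEN iffD2]) simp_all
  then have "(\<lambda>x. ?G (x + c)) \<in> borel_measurable lebesgue"
    using measurable_compose[OF lebesgue_affine_measurable[of "\<lambda>_. 1" c]] by (simp add: add.commute)
  then have "(\<lambda>x. ?G (x + c)) \<in> borel_measurable (lebesgue_on {a - c..b - c})"
    by (rule measurable_restrict_space1)
  then show ?thesis
    by (rule measurable_lebesgue_cong[THEN iffD1, rotated]) auto
qed

lemma set_integrable_Icc_translate:
  fixes G :: "real \<Rightarrow> 'a::{banach, second_countable_topology}"
  assumes "set_integrable lborel {a + c..b + c} G"
  shows "set_integrable lborel {a..b} (\<lambda>x. G (x + c))"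
proof -
  have "(\<lambda>x. indicator {a + c..b + c} (c + 1 * x) *\<^sub>R G (c + 1 * x))
      = (\<lambda>x. indicator {a..b} x *\<^sub>R G (x + c))"
    by (auto simp: fun_eq_iff add.commute split: split_indicator)
  then show ?thesis
    using lborel_integrable_real_affine[of _ 1 c] assms unfolding set_integrable_def by fastforce
qed

lemma set_integral_Icc_translate:
  fixes G :: "real \<Rightarrow> 'a::{banach, second_countable_topology}"
  shows "(LINT x:{a..b}|lborel. G (x + c)) = (LINT x:{a + c..b + c}|lborel. G x)"
proof -
  have "(\<lambda>x. indicator {a + c..b + c} (c + 1 * x) *\<^sub>R G (c + 1 * x))
      = (\<lambda>x. indicator {a..b} x *\<^sub>R G (x + c))"
    by (auto simp: fun_eq_iff add.commute split: split_indicator)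
  then show ?thesis
    using lborel_integral_real_affine[of 1 "\<lambda>x. indicator {a + c..b + c} x *\<^sub>R G x" c]
    unfolding set_lebesgue_integral_def by simp
qed

lemma set_integral_Icc_cong_Ioo:
  fixes F G :: "real \<Rightarrow> 'a::{banach, second_countable_topology}"
  assumes "a \<le> b" "\<And>x. a < x \<Longrightarrow> x < b \<Longrightarrow> F x = G x"
  shows "(LINT x:{a..b}|lborel. F x) = (LINT x:{a..b}|lborel. G x)"
  using assms interval_integral_cong[of a b F G]
  by (simp add: interval_integral_Icc[symmetric] einterval_iff)

lemma set_integral_Icc_split:
  fixes G :: "real \<Rightarrow> 'a::{banach, second_countable_topology}"
  assumes "set_integrable lborel {a..c} G" "a \<le> b" "b \<le> c"
  shows "(LINT x:{a..c}|lborel. G x) = (LINT x:{a..b}|lborel. G x) + (LINT x:{b..c}|lborel. G x)"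
proof -
  have "interval_lebesgue_integrable lborel a c G"
    using assms unfolding interval_lebesgue_integrable_def
    by (auto intro: set_integrable_subset simp: einterval_iff)
  then have "(LBINT x=a..b. G x) + (LBINT x=b..c. G x) = (LBINT x=a..c. G x)"
    using assms(2,3) by (intro interval_integral_sum) (simp add: min_def max_def)
  then show ?thesis
    using assms(2,3) by (simp add: interval_integral_Icc)
qed

definition disjoint_subintervals :: "real \<Rightarrow> nat \<Rightarrow> (nat \<Rightarrow> real) \<Rightarrow> (nat \<Rightarrow> real) \<Rightarrow> bool" where
  "disjoint_subintervals t n \<alpha> \<beta> \<longleftrightarrow>
     (\<forall>k<n. 0 \<le> \<alpha> k \<and> \<alpha> k \<le> \<beta> k \<and> \<beta> k \<le> t) \<and>
     (\<forall>k<n. \<forall>j<n. k \<noteq> j \<longrightarrow> {\<alpha> k<..<\<beta> k} \<inter> {\<alpha> j<..<\<beta> j} = {})"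

lemma abs_cont_on_iff:
  "abs_cont_on t x \<longleftrightarrow>
     (\<forall>e>0. \<exists>d>0. \<forall>n \<alpha> \<beta>. disjoint_subintervals t n \<alpha> \<beta> \<longrightarrow> (\<Sum>k<n. \<beta> k - \<alpha> k) < d \<longrightarrow>
        (\<Sum>k<n. norm (x (\<beta> k) - x (\<alpha> k))) < e)"
  unfolding abs_cont_on_def disjoint_subintervals_def by meson

lemma abs_cont_onD:
  assumes "abs_cont_on t x" "e > 0"
  obtains d where "d > 0" "\<And>n \<alpha> \<beta>. disjoint_subintervals t n \<alpha> \<beta> \<Longrightarrow>
      (\<Sum>k<n. \<beta> k - \<alpha> k) < d \<Longrightarrow> (\<Sum>k<n. norm (x (\<beta> k) - x (\<alpha> k))) < e"
  using assms unfolding abs_cont_on_iff by blast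

lemma disjoint_subintervals_transfer:
  assumes "disjoint_subintervals t n \<alpha> \<beta>"
    and "\<And>k. k < n \<Longrightarrow> 0 \<le> \<alpha>' k \<and> \<alpha>' k \<le> \<beta>' k \<and> \<beta>' k \<le> t'"
    and "\<And>k y. k < n \<Longrightarrow> \<alpha>' k < y \<Longrightarrow> y < \<beta>' k \<Longrightarrow> \<alpha> k < h y \<and> h y < \<beta> k"
  shows "disjoint_subintervals t' n \<alpha>' \<beta>'"
  unfolding disjoint_subintervals_def
proof (intro conjI allI impI)
  fix k j assume "k < n" "j < n" "k \<noteq> j"
  then have "{\<alpha> k<..<\<beta> k} \<inter> {\<alpha> j<..<\<beta> j} = {}"
    using assms(1) unfolding disjoint_subintervals_def by blast
  then show "{\<alpha>' k<..<\<beta>' k} \<inter> {\<alpha>' j<..<\<beta>' j} = {}"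
    using assms(3) \<open>k < n\<close> \<open>j < n\<close> by (fastforce simp: disjoint_iff)
qed (use assms(2) in blast)+

lemma abs_cont_on_translate:
  assumes "abs_cont_on t x" "0 \<le> c" "s + c \<le> t"
  shows "abs_cont_on s (\<lambda>r. x (r + c))"
  unfolding abs_cont_on_iff
proof (intro allI impI)
  fix e :: real assume "e > 0"
  obtain d where "d > 0" and d: "\<And>n \<alpha> \<beta>. disjoint_subintervals t n \<alpha> \<beta> \<Longrightarrow>
      (\<Sum>k<n. \<beta> k - \<alpha> k) < d \<Longrightarrow> (\<Sum>k<n. norm (x (\<beta> k) - x (\<alpha> k))) < e"
    using abs_cont_onD[OF assms(1) \<open>e > 0\<close>] by blast
  have "disjoint_subintervals t n (\<lambda>k. \<alpha> k + c) (\<lambda>k. \<beta> k + c)"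
    if "disjoint_subintervals s n \<alpha> \<beta>" for n \<alpha> \<beta>
    using that assms(2,3)
    by (intro disjoint_subintervals_transfer[OF that, where h = "\<lambda>y. y - c"])
       (auto simp: disjoint_subintervals_def)
  then show "\<exists>d>0. \<forall>n \<alpha> \<beta>. disjoint_subintervals s n \<alpha> \<beta> \<longrightarrow> (\<Sum>k<n. \<beta> k - \<alpha> k) < d \<longrightarrow>
      (\<Sum>k<n. norm (x (\<beta> k + c) - x (\<alpha> k + c))) < e"
    using \<open>d > 0\<close> d[of _ "\<lambda>k. _ k + c" "\<lambda>k. _ k + c"] by auto
qed

definition glue :: "real \<Rightarrow> (real \<Rightarrow> 'a) \<Rightarrow> (real \<Rightarrow> 'a) \<Rightarrow> real \<Rightarrow> 'a" where
  "glue a y z r = (if r \<le> a then y r else z (r - a))"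

lemma norm_diff_le_split:
  fixes g :: "real \<Rightarrow> 'a::real_normed_vector"
  assumes "\<alpha> \<le> \<beta>"
  shows "norm (g \<beta> - g \<alpha>) \<le> norm (g (min \<beta> a) - g (min \<alpha> a)) + norm (g (max \<beta> a) - g (max \<alpha> a))"
proof (cases "\<alpha> \<le> a \<and> a \<le> \<beta>")
  case True
  have "norm (g \<beta> - g \<alpha>) \<le> norm (g a - g \<alpha>) + norm (g \<beta> - g a)"
    using norm_triangle_ineq[of "g a - g \<alpha>" "g \<beta> - g a"] by simp
  then show ?thesis
    using True by (simp add: min_absorb1 min_absorb2 max_absorb1 max_absorb2)
next
  case False
  then have "\<beta> \<le> a \<or> a \<le> \<alpha>"
    using assms by linarith
  then show ?thesis
    using assms by (auto simp: min_absorb1 min_absorb2 max_absorb1 max_absorb2)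
qed

lemma disjoint_subintervals_split:
  assumes fam: "disjoint_subintervals (a + b) n \<alpha> \<beta>" and "0 \<le> a" "0 \<le> b"
  shows "disjoint_subintervals a n (\<lambda>k. min (\<alpha> k) a) (\<lambda>k. min (\<beta> k) a)"
    and "disjoint_subintervals b n (\<lambda>k. max (\<alpha> k) a - a) (\<lambda>k. max (\<beta> k) a - a)"
    and "(\<Sum>k<n. min (\<beta> k) a - min (\<alpha> k) a) \<le> (\<Sum>k<n. \<beta> k - \<alpha> k)"
    and "(\<Sum>k<n. (max (\<beta> k) a - a) - (max (\<alpha> k) a - a)) \<le> (\<Sum>k<n. \<beta> k - \<alpha> k)"
proof -
  have ordered: "0 \<le> \<alpha> k \<and> \<alpha> k \<le> \<beta> k \<and> \<beta> k \<le> a + b" if "k < n" for k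
    using fam that unfolding disjoint_subintervals_def by blast
  show "disjoint_subintervals a n (\<lambda>k. min (\<alpha> k) a) (\<lambda>k. min (\<beta> k) a)"
    using \<open>0 \<le> a\<close> by (intro disjoint_subintervals_transfer[OF fam, where h = id])
      (auto simp: min_def split: if_splits dest!: ordered)
  show "disjoint_subintervals b n (\<lambda>k. max (\<alpha> k) a - a) (\<lambda>k. max (\<beta> k) a - a)"
    using \<open>0 \<le> a\<close> \<open>0 \<le> b\<close> by (intro disjoint_subintervals_transfer[OF fam, where h = "\<lambda>r. r + a"])
      (auto simp: max_def split: if_splits dest!: ordered)
  show "(\<Sum>k<n. min (\<beta> k) a - min (\<alpha> k) a) \<le> (\<Sum>k<n. \<beta> k - \<alpha> k)"
    "(\<Sum>k<n. (max (\<beta> k) a - a) - (max (\<alpha> k) a - a)) \<le> (\<Sum>k<n. \<beta> k - \<alpha> k)"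
    by (auto intro!: sum_mono simp: min_def max_def dest!: ordered)
qed

lemma abs_cont_on_glue:
  assumes y: "abs_cont_on a y" and z: "abs_cont_on b z" and "z 0 = y a" "0 \<le> a" "0 \<le> b"
  shows "abs_cont_on (a + b) (glue a y z)"
  unfolding abs_cont_on_iff
proof (intro allI impI)
  fix e :: real assume "e > 0"
  then have "e / 2 > 0"
    by simp
  obtain d1 where "d1 > 0" and d1: "\<And>n \<alpha> \<beta>. disjoint_subintervals a n \<alpha> \<beta> \<Longrightarrow>
      (\<Sum>k<n. \<beta> k - \<alpha> k) < d1 \<Longrightarrow> (\<Sum>k<n. norm (y (\<beta> k) - y (\<alpha> k))) < e / 2"
    using abs_cont_onD[OF y \<open>e / 2 > 0\<close>] by blast
  obtain d2 where "d2 > 0" and d2: "\<And>n \<alpha> \<beta>. disjoint_subintervals b n \<alpha> \<beta> \<Longrightarrow>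
      (\<Sum>k<n. \<beta> k - \<alpha> k) < d2 \<Longrightarrow> (\<Sum>k<n. norm (z (\<beta> k) - z (\<alpha> k))) < e / 2"
    using abs_cont_onD[OF z \<open>e / 2 > 0\<close>] by blast
  show "\<exists>d>0. \<forall>n \<alpha> \<beta>. disjoint_subintervals (a + b) n \<alpha> \<beta> \<longrightarrow> (\<Sum>k<n. \<beta> k - \<alpha> k) < d \<longrightarrow>
      (\<Sum>k<n. norm (glue a y z (\<beta> k) - glue a y z (\<alpha> k))) < e"
  proof (intro exI[of _ "min d1 d2"] conjI allI impI)
    fix n \<alpha> \<beta>
    assume fam: "disjoint_subintervals (a + b) n \<alpha> \<beta>" and len: "(\<Sum>k<n. \<beta> k - \<alpha> k) < min d1 d2"
    note split = disjoint_subintervals_split[OF fam \<open>0 \<le> a\<close> \<open>0 \<le> b\<close>]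
    have "glue a y z (min r a) = y (min r a)" "glue a y z (max r a) = z (max r a - a)" for r
      using \<open>z 0 = y a\<close> by (auto simp: glue_def max_def)
    then have "(\<Sum>k<n. norm (glue a y z (\<beta> k) - glue a y z (\<alpha> k)))
        \<le> (\<Sum>k<n. norm (y (min (\<beta> k) a) - y (min (\<alpha> k) a))
                  + norm (z (max (\<beta> k) a - a) - z (max (\<alpha> k) a - a)))"
      using fam norm_diff_le_split[of _ _ "glue a y z" a]
      by (intro sum_mono) (simp add: disjoint_subintervals_def)
    also have "\<dots> = (\<Sum>k<n. norm (y (min (\<beta> k) a) - y (min (\<alpha> k) a)))
                  + (\<Sum>k<n. norm (z (max (\<beta> k) a - a) - z (max (\<alpha> k) a - a)))"
      by (rule sum.distrib)
    also have "\<dots> < e / 2 + e / 2"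
      using split len by (intro add_strict_mono d1 d2) auto
    finally show "(\<Sum>k<n. norm (glue a y z (\<beta> k) - glue a y z (\<alpha> k))) < e"
      by simp
  qed (use \<open>d1 > 0\<close> \<open>d2 > 0\<close> in simp)
qed

lemma glue_map2:
  "glue a (\<lambda>r. h (y r) (u r)) (\<lambda>r. h (z r) (v r)) = (\<lambda>r. h (glue a y z r) (glue a u v r))"
  by (simp add: glue_def fun_eq_iff)

lemma borel_measurable_glue:
  fixes u v :: "real \<Rightarrow> 'u::euclidean_space"
  assumes "u \<in> borel_measurable (lebesgue_on {0..a})" "v \<in> borel_measurable (lebesgue_on {0..b})"
  shows "glue a u v \<in> borel_measurable (lebesgue_on {0..a + b})"
proof -
  have "(\<lambda>r. v (r + - a)) \<in> borel_measurable (lebesgue_on {a..a + b})"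
    using borel_measurable_lebesgue_on_translate[OF assms(2), of "- a"] by (simp add: add.commute)
  then have v_ext: "(\<lambda>r. if r \<in> {a..a + b} then v (r - a) else 0) \<in> borel_measurable lebesgue"
    by (intro borel_measurable_if[THEN iffD2]) simp_all
  have u_ext: "(\<lambda>r. if r \<in> {0..a} then u r else 0) \<in> borel_measurable lebesgue"
    using assms(1) by (intro borel_measurable_if[THEN iffD2]) simp_all
  let ?w = "\<lambda>r. if r \<le> a then (if r \<in> {0..a} then u r else 0)
                else (if r \<in> {a..a + b} then v (r - a) else 0)"
  have "?w \<in> borel_measurable lebesgue"
    using u_ext v_ext by (rule measurable_If) simp
  then have "?w \<in> borel_measurable (lebesgue_on {0..a + b})"
    by (rule measurable_restrict_space1)
  then show ?thesis
    by (rule measurable_lebesgue_cong[THEN iffD1, rotated]) (auto simp: glue_def)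
qed

lemma AE_has_vector_derivative_glue:
  assumes "AE r in lebesgue. r \<in> {0<..<a} \<longrightarrow> (y has_vector_derivative F r) (at r)"
    and "AE r in lebesgue. r \<in> {0<..<b} \<longrightarrow> (z has_vector_derivative G r) (at r)"
  shows "AE r in lebesgue. r \<in> {0<..<a + b} \<longrightarrow> (glue a y z has_vector_derivative glue a F G r) (at r)"
proof -
  have "AE r in lebesgue. r + - a \<in> {0<..<b} \<longrightarrow> (z has_vector_derivative G (r + - a)) (at (r + - a))"
    by (rule AE_lebesgue_translate[OF assms(2)])
  moreover have "AE r in lebesgue. r \<noteq> a"
    by (rule AE_completion[OF AE_lborel_singleton])
  ultimately show ?thesis
    using assms(1)
  proof (elim AE_mp, intro AE_I2 impI)
    fix r assume z': "r + - a \<in> {0<..<b} \<longrightarrow> (z has_vector_derivative G (r + - a)) (at (r + - a))"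
      and "r \<noteq> a" and y': "r \<in> {0<..<a} \<longrightarrow> (y has_vector_derivative F r) (at r)"
      and r: "r \<in> {0<..<a + b}"
    consider "r < a" | "a < r"
      using \<open>r \<noteq> a\<close> by linarith
    then show "(glue a y z has_vector_derivative glue a F G r) (at r)"
    proof cases
      case 1
      with y' r have "(y has_vector_derivative glue a F G r) (at r)"
        by (simp add: glue_def)
      then show ?thesis
        by (rule has_vector_derivative_transform_within_open[where S = "{..<a}"])
           (use 1 in \<open>auto simp: glue_def\<close>)
    next
      case 2
      with z' r have "(z has_vector_derivative glue a F G r) (at (r + - a))"
        by (simp add: glue_def)
      then have "((\<lambda>s. z (s + - a)) has_vector_derivative glue a F G r) (at r)"
        by (rule has_vector_derivative_translate)
      then show ?thesis
        by (rule has_vector_derivative_transform_within_open[where S = "{a<..}"])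
           (use 2 in \<open>auto simp: glue_def\<close>)
    qed
  qed
qed

lemma set_integral_glue:
  fixes F G :: "real \<Rightarrow> 'a::{banach, second_countable_topology}"
  assumes F: "set_integrable lborel {0..a} F" and G: "set_integrable lborel {0..b} G"
    and "0 \<le> a" "0 \<le> b"
  shows "set_integrable lborel {0..a + b} (glue a F G)"
    and "(LINT s:{0..a + b}|lborel. glue a F G s)
      = (LINT s:{0..a}|lborel. F s) + (LINT s:{0..b}|lborel. G s)"
proof -
  have G': "set_integrable lborel {a..a + b} (\<lambda>s. G (s + - a))"
    by (rule set_integrable_Icc_translate) (use G in simp)
  have "set_integrable lborel {0..a} (glue a F G)"
    using F by (rule set_integrable_cong[THEN iffD1, rotated -1]) (auto simp: glue_def)
  moreover have "set_integrable lborel {a<..a + b} (glue a F G)"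
    using set_integrable_subset[OF G', of "{a<..a + b}"]
    by (rule set_integrable_cong[THEN iffD1, rotated -1]) (auto simp: glue_def)
  moreover have "{0..a} \<union> {a<..a + b} = {0..a + b}"
    using \<open>0 \<le> a\<close> \<open>0 \<le> b\<close> by auto
  ultimately show integrable: "set_integrable lborel {0..a + b} (glue a F G)"
    by (metis set_integrable_Un sets_lborel atLeastAtMost_borel greaterThanAtMost_borel)
  have "(LINT s:{0..a + b}|lborel. glue a F G s)
      = (LINT s:{0..a}|lborel. glue a F G s) + (LINT s:{a..a + b}|lborel. glue a F G s)"
    using integrable \<open>0 \<le> a\<close> \<open>0 \<le> b\<close> by (intro set_integral_Icc_split) auto
  also have "(LINT s:{0..a}|lborel. glue a F G s) = (LINT s:{0..a}|lborel. F s)"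
    using \<open>0 \<le> a\<close> by (intro set_integral_Icc_cong_Ioo) (auto simp: glue_def)
  also have "(LINT s:{a..a + b}|lborel. glue a F G s) = (LINT s:{a..a + b}|lborel. G (s + - a))"
    using \<open>0 \<le> b\<close> by (intro set_integral_Icc_cong_Ioo) (auto simp: glue_def)
  also have "\<dots> = (LINT s:{0..b}|lborel. G s)"
    using set_integral_Icc_translate[where G = G and a = a and b = "a + b" and c = "- a"] by simp
  finally show "(LINT s:{0..a + b}|lborel. glue a F G s)
      = (LINT s:{0..a}|lborel. F s) + (LINT s:{0..b}|lborel. G s)" .
qed

section \<open>The Lax-Oleinik semigroup\<close>

definition path_cost :: "('x \<Rightarrow> 'u \<Rightarrow> real) \<Rightarrow> real \<Rightarrow> (real \<Rightarrow> 'u) \<Rightarrow> (real \<Rightarrow> 'x) \<Rightarrow> real" where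
  "path_cost lc t u x = (LINT s:{0..t}|lborel. lc (x s) (u s))"

lemma admissible_iff:
  "admissible X U lc f t x0 u x \<longleftrightarrow>
     u \<in> borel_measurable (lebesgue_on {0..t}) \<and> (\<forall>s\<in>{0..t}. u s \<in> U) \<and>
     abs_cont_on t x \<and> (\<forall>s\<in>{0..t}. x s \<in> X) \<and> x 0 = x0 \<and>
     (AE s in lebesgue. s \<in> {0<..<t} \<longrightarrow> (x has_vector_derivative f (x s) (u s)) (at s)) \<and>
     set_integrable lborel {0..t} (\<lambda>s. lc (x s) (u s))"
  unfolding admissible_def AE_has_vector_derivative_Icc_iff ..

lemma admissible_glue:
  assumes adm_a: "admissible X U lc f a x0 u x" and adm_b: "admissible X U lc f b (x a) v y"
    and "0 \<le> a" "0 \<le> b"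
  shows "admissible X U lc f (a + b) x0 (glue a u v) (glue a x y)"
    and "path_cost lc (a + b) (glue a u v) (glue a x y) = path_cost lc a u x + path_cost lc b v y"
    and "glue a x y (a + b) = y b"
proof -
  note a = adm_a[unfolded admissible_iff] and b = adm_b[unfolded admissible_iff]
  have cost: "set_integrable lborel {0..a + b} (\<lambda>s. lc (glue a x y s) (glue a u v s))"
    "path_cost lc (a + b) (glue a u v) (glue a x y) = path_cost lc a u x + path_cost lc b v y"
    using set_integral_glue[where F = "\<lambda>s. lc (x s) (u s)" and G = "\<lambda>s. lc (y s) (v s)"]
      a b \<open>0 \<le> a\<close> \<open>0 \<le> b\<close>
    unfolding path_cost_def glue_map2 by auto
  have "AE s in lebesgue. s \<in> {0<..<a + b} \<longrightarrow>
      (glue a x y has_vector_derivative f (glue a x y s) (glue a u v s)) (at s)"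
    using AE_has_vector_derivative_glue[of a x "\<lambda>s. f (x s) (u s)" b y "\<lambda>s. f (y s) (v s)"] a b
    unfolding glue_map2 by blast
  moreover have "glue a u v \<in> borel_measurable (lebesgue_on {0..a + b})"
    using a b by (intro borel_measurable_glue) auto
  moreover have "abs_cont_on (a + b) (glue a x y)"
    using a b \<open>0 \<le> a\<close> \<open>0 \<le> b\<close> by (intro abs_cont_on_glue) auto
  ultimately show "admissible X U lc f (a + b) x0 (glue a u v) (glue a x y)"
    unfolding admissible_iff using a b cost(1) \<open>0 \<le> a\<close> by (auto simp: glue_def)
  show "path_cost lc (a + b) (glue a u v) (glue a x y) = path_cost lc a u x + path_cost lc b v y"
    by (fact cost(2))
  show "glue a x y (a + b) = y b"
    using b \<open>0 \<le> b\<close> by (auto simp: glue_def)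
qed

lemma admissible_restrict:
  assumes "admissible X U lc f (a + b) x0 u x" "0 \<le> b"
  shows "admissible X U lc f a x0 u x"
proof -
  note A = assms(1)[unfolded admissible_iff]
  show ?thesis
    unfolding admissible_iff
  proof (intro conjI)
    show "u \<in> borel_measurable (lebesgue_on {0..a})"
      using A \<open>0 \<le> b\<close> by (auto intro: measurable_restrict_mono)
    show "abs_cont_on a x"
      using abs_cont_on_translate[of "a + b" x 0 a] A \<open>0 \<le> b\<close> by simp
    show "AE s in lebesgue. s \<in> {0<..<a} \<longrightarrow> (x has_vector_derivative f (x s) (u s)) (at s)"
      using A \<open>0 \<le> b\<close> by (auto elim!: eventually_mono)
    have "set_integrable lborel {0..a + b} (\<lambda>s. lc (x s) (u s))"
      using A by blast
    then show "set_integrable lborel {0..a} (\<lambda>s. lc (x s) (u s))"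
      by (rule set_integrable_subset) (use \<open>0 \<le> b\<close> in auto)
  qed (use A \<open>0 \<le> b\<close> in auto)
qed

lemma admissible_translate:
  assumes "admissible X U lc f (a + b) x0 u x" "0 \<le> a"
  shows "admissible X U lc f b (x a) (\<lambda>r. u (r + a)) (\<lambda>r. x (r + a))"
proof -
  note A = assms(1)[unfolded admissible_iff]
  show ?thesis
    unfolding admissible_iff
  proof (intro conjI)
    have "(\<lambda>r. u (r + a)) \<in> borel_measurable (lebesgue_on {0 - a..a + b - a})"
      using A by (intro borel_measurable_lebesgue_on_translate) auto
    then show "(\<lambda>r. u (r + a)) \<in> borel_measurable (lebesgue_on {0..b})"
      by (rule measurable_restrict_mono) (use \<open>0 \<le> a\<close> in auto)
    show "abs_cont_on b (\<lambda>r. x (r + a))"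
      using A \<open>0 \<le> a\<close> by (intro abs_cont_on_translate) auto
    have "AE r in lebesgue. r + a \<in> {0<..<a + b} \<longrightarrow>
        (x has_vector_derivative f (x (r + a)) (u (r + a))) (at (r + a))"
      using A by (intro AE_lebesgue_translate) blast
    then show "AE r in lebesgue. r \<in> {0<..<b} \<longrightarrow>
        ((\<lambda>r. x (r + a)) has_vector_derivative f (x (r + a)) (u (r + a))) (at r)"
      using \<open>0 \<le> a\<close> by (auto elim!: eventually_mono intro: has_vector_derivative_translate)
    have "set_integrable lborel {0..a + b} (\<lambda>s. lc (x s) (u s))"
      using A by blast
    then have "set_integrable lborel {0 + a..b + a} (\<lambda>s. lc (x s) (u s))"
      by (rule set_integrable_subset) (use \<open>0 \<le> a\<close> in auto)
    then show "set_integrable lborel {0..b} (\<lambda>s. lc (x (s + a)) (u (s + a)))"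
      by (rule set_integrable_Icc_translate)
  qed (use A \<open>0 \<le> a\<close> in auto)
qed

lemma path_cost_split:
  assumes "admissible X U lc f (a + b) x0 u x" "0 \<le> a" "0 \<le> b"
  shows "path_cost lc (a + b) u x = path_cost lc a u x + path_cost lc b (\<lambda>r. u (r + a)) (\<lambda>r. x (r + a))"
proof -
  have "set_integrable lborel {0..a + b} (\<lambda>s. lc (x s) (u s))"
    using assms(1) unfolding admissible_iff by blast
  then have "path_cost lc (a + b) u x = path_cost lc a u x + (LINT s:{a..a + b}|lborel. lc (x s) (u s))"
    unfolding path_cost_def using assms(2,3) by (intro set_integral_Icc_split) auto
  also have "(LINT s:{a..a + b}|lborel. lc (x s) (u s)) = path_cost lc b (\<lambda>r. u (r + a)) (\<lambda>r. x (r + a))"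
    unfolding path_cost_def
    using set_integral_Icc_translate[where G = "\<lambda>s. lc (x s) (u s)" and a = 0 and b = b and c = a]
    by (simp add: add.commute)
  finally show ?thesis .
qed

lemma S_op_altdef:
  "S_op X U lc f t g x0 =
     (SUP p\<in>{(u, x). admissible X U lc f t x0 u x}. ereal (path_cost lc t (fst p) (snd p)) \<oplus> g (snd p t))"
  unfolding S_op_def path_cost_def by (simp add: case_prod_beta)

lemma S_op_upper:
  "admissible X U lc f t x0 u x \<Longrightarrow> ereal (path_cost lc t u x) \<oplus> g (x t) \<le> S_op X U lc f t g x0"
  unfolding S_op_altdef by (rule SUP_upper2[of "(u, x)"]) auto

lemma S_op_least:
  "(\<And>u x. admissible X U lc f t x0 u x \<Longrightarrow> ereal (path_cost lc t u x) \<oplus> g (x t) \<le> c) \<Longrightarrow>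
   S_op X U lc f t g x0 \<le> c"
  unfolding S_op_altdef by (rule SUP_least) auto

lemma S_op_mp_plus: "S_op X U lc f t (\<lambda>y. g y \<oplus> c) x = S_op X U lc f t g x \<oplus> c"
  unfolding S_op_altdef SUP_mp_plus by (simp add: mp_plus_assoc)

lemma S_op_SUP: "S_op X U lc f t (\<lambda>y. SUP k\<in>K. g k y) x = (SUP k\<in>K. S_op X U lc f t (g k) x)"
  unfolding S_op_altdef mp_plus_SUP by (rule SUP_commute)

lemma admissible_endpoint: "admissible X U lc f t x0 u x \<Longrightarrow> 0 \<le> t \<Longrightarrow> x t \<in> X"
  unfolding admissible_def by auto

lemma S_op_mono:
  assumes "0 \<le> t" "\<forall>x\<in>X. g x \<le> h x"
  shows "S_op X U lc f t g x0 \<le> S_op X U lc f t h x0"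
  using assms
  by (intro S_op_least order.trans[OF _ S_op_upper] mp_plus_mono) (auto dest: admissible_endpoint)

lemma monotone_homogeneous_on_S_op: "0 \<le> t \<Longrightarrow> monotone_homogeneous_on X (S_op X U lc f t)"
  by (intro monotone_homogeneous_onI S_op_mono S_op_mp_plus)

lemma S_op_add:
  assumes "0 \<le> a" "0 \<le> b"
  shows "S_op X U lc f a (S_op X U lc f b g) x0 = S_op X U lc f (a + b) g x0"
proof (rule order.antisym)
  let ?R = "S_op X U lc f (a + b) g x0"
  show "S_op X U lc f a (S_op X U lc f b g) x0 \<le> ?R"
  proof (rule S_op_least)
    fix u x assume adm_a: "admissible X U lc f a x0 u x"
    have "S_op X U lc f b g (x a) \<le> ?R \<oplus> ereal (- path_cost lc a u x)"
    proof (rule S_op_least)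
      fix v y assume adm_b: "admissible X U lc f b (x a) v y"
      have "ereal (path_cost lc a u x) \<oplus> (ereal (path_cost lc b v y) \<oplus> g (y b))
          = ereal (path_cost lc (a + b) (glue a u v) (glue a x y)) \<oplus> g (glue a x y (a + b))"
        using admissible_glue[OF adm_a adm_b assms] by (simp add: mp_plus_assoc[symmetric])
      also have "\<dots> \<le> ?R"
        using admissible_glue[OF adm_a adm_b assms] by (intro S_op_upper)
      finally show "ereal (path_cost lc b v y) \<oplus> g (y b) \<le> ?R \<oplus> ereal (- path_cost lc a u x)"
        by (simp only: mp_plus_ereal_le_iff)
    qed
    then show "ereal (path_cost lc a u x) \<oplus> S_op X U lc f b g (x a) \<le> ?R"
      by (simp only: mp_plus_ereal_le_iff)
  qed
  show "?R \<le> S_op X U lc f a (S_op X U lc f b g) x0"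
  proof (rule S_op_least)
    fix u x assume adm: "admissible X U lc f (a + b) x0 u x"
    have "ereal (path_cost lc (a + b) u x) \<oplus> g (x (a + b))
        = ereal (path_cost lc a u x) \<oplus> (ereal (path_cost lc b (\<lambda>r. u (r + a)) (\<lambda>r. x (r + a))) \<oplus> g (x (b + a)))"
      using path_cost_split[OF adm assms] by (simp add: add.commute mp_plus_assoc[symmetric])
    also have "\<dots> \<le> ereal (path_cost lc a u x) \<oplus> S_op X U lc f b g (x a)"
      using S_op_upper[OF admissible_translate[OF adm \<open>0 \<le> a\<close>]] by (intro mp_plus_mono) simp_all
    also have "\<dots> \<le> S_op X U lc f a (S_op X U lc f b g) x0"
      by (rule S_op_upper[OF admissible_restrict[OF adm \<open>0 \<le> b\<close>]])
    finally show "ereal (path_cost lc (a + b) u x) \<oplus> g (x (a + b))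
        \<le> S_op X U lc f a (S_op X U lc f b g) x0" .
  qed
qed

lemma sup_dist_S_op_le:
  "0 \<le> t \<Longrightarrow> sup_dist X (S_op X U lc f t g) (S_op X U lc f t h) \<le> sup_dist X g h"
  by (intro monotone_homogeneous_on_nonexpansive monotone_homogeneous_on_S_op)

lemma S_op_mult_Suc:
  assumes "0 \<le> \<delta>"
  shows "S_op X U lc f \<delta> (S_op X U lc f (real k * \<delta>) g) x = S_op X U lc f (real (Suc k) * \<delta>) g x"
proof -
  have "real (Suc k) * \<delta> = \<delta> + real k * \<delta>"
    by (simp add: algebra_simps)
  then show ?thesis
    using assms by (simp add: S_op_add)
qed

lemma path_cost_0 [simp]: "path_cost lc 0 u x = 0"
  unfolding path_cost_def using set_integral_Icc_cong_Ioo[of 0 0 _ "\<lambda>_. 0"] by simp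

lemma S_op_0:
  assumes "U \<noteq> {}" "x0 \<in> X"
  shows "S_op X U lc f 0 g x0 = g x0"
proof (rule order.antisym)
  show "S_op X U lc f 0 g x0 \<le> g x0"
    by (rule S_op_least) (simp add: admissible_def zero_ereal_def[symmetric])
  obtain u0 where "u0 \<in> U"
    using assms(1) by blast
  have "admissible X U lc f 0 x0 (\<lambda>_. u0) (\<lambda>_. x0)"
    unfolding admissible_iff abs_cont_on_def using \<open>u0 \<in> U\<close> assms(2)
    by (auto intro: borel_integrable_atLeastAtMost')
  from S_op_upper[OF this, of g] show "g x0 \<le> S_op X U lc f 0 g x0"
    by (simp add: zero_ereal_def[symmetric])
qed

lemma S_op_no_controls: "0 \<le> t \<Longrightarrow> S_op X {} lc f t g = (\<lambda>_. -\<infinity>)"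
  by (auto simp: fun_eq_iff admissible_def intro!: order.antisym[OF S_op_least])

section \<open>The max-plus finite element method\<close>

lemma pairing_mp_plus: "pairing X z (\<lambda>y. g y \<oplus> c) = pairing X z g \<oplus> c"
  unfolding pairing_def SUP_mp_plus by (simp add: mp_plus_assoc)

lemma pairing_mono: "\<forall>x\<in>X. g x \<le> h x \<Longrightarrow> pairing X z g \<le> pairing X z h"
  unfolding pairing_def by (intro SUP_subset_mono order.refl mp_plus_mono) auto

lemma W_res_mp_plus_ereal: "W_res X w (\<lambda>y. g y \<oplus> ereal c) i = W_res X w g i \<oplus> ereal c"
  unfolding W_res_def mp_res_mp_plus_ereal INF_mp_plus_ereal ..

lemma W_res_mono: "\<forall>x\<in>X. g x \<le> h x \<Longrightarrow> W_res X w g i \<le> W_res X w h i"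
  unfolding W_res_def by (intro INF_superset_mono order.refl mp_res_mono) auto

lemma monotone_homogeneous_on_proj_Z: "monotone_homogeneous_on X (proj_Z X q z)"
  unfolding proj_Z_def
  by (intro monotone_homogeneous_onI INF_superset_mono order.refl mp_res_mono pairing_mono)
     (simp_all add: pairing_mp_plus mp_res_mp_plus_ereal INF_mp_plus_ereal)

lemma monotone_homogeneous_on_proj_W: "monotone_homogeneous_on X (proj_W X p w)"
  unfolding proj_W_def W_op_def
  by (intro monotone_homogeneous_onI SUP_subset_mono order.refl mp_plus_mono W_res_mono)
     (simp_all add: W_res_mp_plus_ereal SUP_mp_plus mp_plus_assoc)

lemma W_op_mpfem_coeffs_Suc:
  "W_op p w (mpfem_coeffs X U lc f \<phi> p w q z \<delta> (Suc k)) =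
   proj_W X p w (proj_Z X q z (S_op X U lc f \<delta> (W_op p w (mpfem_coeffs X U lc f \<phi> p w q z \<delta> k))))"
proof -
  define lam where "lam = mpfem_coeffs X U lc f \<phi> p w q z \<delta> k"
  define G where "G = S_op X U lc f \<delta> (W_op p w lam)"
  have G_eq: "G y = (SUP i\<in>{..<p}. S_op X U lc f \<delta> (w i) y \<oplus> lam i)" for y
    unfolding G_def W_op_def[abs_def] S_op_SUP S_op_mp_plus ..
  have K_action: "mat_apply p (\<lambda>j i. pairing X (z j) (S_op X U lc f \<delta> (w i))) lam j = pairing X (z j) G"
    for j
  proof -
    have "mat_apply p (\<lambda>j i. pairing X (z j) (S_op X U lc f \<delta> (w i))) lam j
       = (SUP i\<in>{..<p}. SUP y\<in>X. z j y \<oplus> S_op X U lc f \<delta> (w i) y \<oplus> lam i)"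
      unfolding mat_apply_def pairing_def SUP_mp_plus ..
    also have "\<dots> = (SUP y\<in>X. SUP i\<in>{..<p}. z j y \<oplus> (S_op X U lc f \<delta> (w i) y \<oplus> lam i))"
      by (subst SUP_commute) (simp add: mp_plus_assoc)
    also have "\<dots> = pairing X (z j) G"
      unfolding pairing_def G_eq mp_plus_SUP ..
    finally show ?thesis .
  qed
  have "W_res X w (proj_Z X q z G) i
     = (INF y\<in>X. INF j\<in>{..<q}. mp_res (z j y \<oplus> w i y) (pairing X (z j) G))" for i
    unfolding W_res_def proj_Z_def mp_res_INF mp_res_mp_res ..
  also have "\<dots> i = (INF j\<in>{..<q}. INF y\<in>X. mp_res (z j y \<oplus> w i y) (pairing X (z j) G))" for i
    by (rule INF_commute)
  also have "\<dots> i = (INF j\<in>{..<q}. mp_res (pairing X (z j) (w i)) (pairing X (z j) G))" for i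
    unfolding pairing_def mp_res_SUP ..
  also have "\<dots> i = mpfem_coeffs X U lc f \<phi> p w q z \<delta> (Suc k) i" for i
    by (simp add: lam_def[symmetric] mat_res_def K_action)
  finally have "W_res X w (proj_Z X q z G) = mpfem_coeffs X U lc f \<phi> p w q z \<delta> (Suc k)"
    by (rule ext)
  then show ?thesis
    unfolding proj_W_def G_def lam_def by simp
qed

lemma sup_dist_proj_W_proj_Z_le:
  "sup_dist X (proj_W X p w (proj_Z X q z g)) (proj_W X p w (proj_Z X q z h)) \<le> sup_dist X g h"
  by (rule order.trans[OF monotone_homogeneous_on_nonexpansive monotone_homogeneous_on_nonexpansive])
     (rule monotone_homogeneous_on_proj_W monotone_homogeneous_on_proj_Z)+

(* S^0 is the identity on X only if there are controls; without controls every S^t is -\<infinity>. *)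
lemma mpfem_initial_error:
  assumes "0 \<le> \<delta>"
  shows "sup_dist X (S_op X U lc f \<delta> (W_op p w (mpfem_coeffs X U lc f \<phi> p w q z \<delta> 0)))
                    (S_op X U lc f \<delta> \<phi>)
       \<le> sup_dist X (proj_W X p w (S_op X U lc f 0 \<phi>)) (S_op X U lc f 0 \<phi>)"
proof (cases "U = {}")
  case True
  then show ?thesis
    using assms by (simp add: S_op_no_controls sup_dist_self sup_dist_nonneg)
next
  case False
  then have "W_res X w (S_op X U lc f 0 \<phi>) = W_res X w \<phi>"
    unfolding W_res_def by (intro ext INF_cong) (simp_all add: S_op_0)
  with False have "sup_dist X (proj_W X p w (S_op X U lc f 0 \<phi>)) (S_op X U lc f 0 \<phi>)
      = sup_dist X (proj_W X p w \<phi>) \<phi>"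
    by (intro sup_dist_cong) (simp_all add: S_op_0 proj_W_def)
  moreover have "sup_dist X (S_op X U lc f \<delta> (proj_W X p w \<phi>)) (S_op X U lc f \<delta> \<phi>)
      \<le> sup_dist X (proj_W X p w \<phi>) \<phi>"
    using assms by (intro monotone_homogeneous_on_nonexpansive monotone_homogeneous_on_S_op)
  ultimately show ?thesis
    by (simp add: proj_W_def)
qed

lemma mpfem_error_bound:
  assumes "0 < \<delta>" "1 \<le> N"
    and projection_error: "\<And>k. k \<le> N \<Longrightarrow>
      sup_dist X (proj_Z X q z (S_op X U lc f (real k * \<delta>) \<phi>)) (S_op X U lc f (real k * \<delta>) \<phi>)
      + sup_dist X (proj_W X p w (S_op X U lc f (real k * \<delta>) \<phi>)) (S_op X U lc f (real k * \<delta>) \<phi>) \<le> e"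
  shows "sup_dist X (W_op p w (mpfem_coeffs X U lc f \<phi> p w q z \<delta> N))
                    (S_op X U lc f (real N * \<delta>) \<phi>)
    \<le> ereal (real (Suc N)) * e"
proof -
  define V where "V k = S_op X U lc f (real k * \<delta>) \<phi>" for k
  have "sup_dist X (S_op X U lc f \<delta> (W_op p w (mpfem_coeffs X U lc f \<phi> p w q z \<delta> 0))) (V (Suc 0))
      \<le> sup_dist X (proj_W X p w (V 0)) (V 0)"
    unfolding V_def using mpfem_initial_error[OF less_imp_le[OF \<open>0 < \<delta>\<close>]] by simp
  also have "\<dots> \<le> e"
    unfolding V_def by (rule order.trans[OF add_increasing[OF sup_dist_nonneg order.refl] projection_error]) simp
  finally have initial_error:
    "sup_dist X (S_op X U lc f \<delta> (W_op p w (mpfem_coeffs X U lc f \<phi> p w q z \<delta> 0))) (V (Suc 0)) \<le> e" .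
  have P_error: "sup_dist X (proj_W X p w (proj_Z X q z (V k))) (V k) \<le> e" if "k \<le> N" for k
    unfolding V_def
    by (rule order.trans[OF sup_dist_comp_le[OF monotone_homogeneous_on_proj_W, where G = "proj_Z X q z"]
          projection_error[OF that]])
  show ?thesis
    unfolding V_def[symmetric]
  proof (rule sup_dist_iteration_error[where S = "S_op X U lc f \<delta>"
        and P = "\<lambda>g. proj_W X p w (proj_Z X q z g)"])
    show "sup_dist X (S_op X U lc f \<delta> g) (S_op X U lc f \<delta> h) \<le> sup_dist X g h" for g h
      using \<open>0 < \<delta>\<close> by (simp add: sup_dist_S_op_le)
    show "V (Suc k) x = S_op X U lc f \<delta> (V k) x" for k x
      unfolding V_def using \<open>0 < \<delta>\<close> by (simp add: S_op_mult_Suc)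
    show "W_op p w (mpfem_coeffs X U lc f \<phi> p w q z \<delta> (Suc k))
        = proj_W X p w (proj_Z X q z (S_op X U lc f \<delta> (W_op p w (mpfem_coeffs X U lc f \<phi> p w q z \<delta> k))))"
      for k
      by (rule W_op_mpfem_coeffs_Suc)
  qed (use initial_error P_error \<open>1 \<le> N\<close> in \<open>simp_all add: sup_dist_proj_W_proj_Z_le\<close>)
qed

theorem corollary5p3:
  fixes X :: "(real ^ 'n) set" and U :: "(real ^ 'm) set"
    and lc :: "real ^ 'n \<Rightarrow> real ^ 'm \<Rightarrow> real"
    and f :: "real ^ 'n \<Rightarrow> real ^ 'm \<Rightarrow> real ^ 'n"
    and T :: real and \<phi> :: "real ^ 'n \<Rightarrow> ereal"
    and p q N :: nat
    and w z :: "nat \<Rightarrow> real ^ 'n \<Rightarrow> ereal"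
    and \<delta> :: real
  assumes T_pos: "T > 0"
    and phi_fin: "\<forall>x\<in>X. \<phi> x \<noteq> \<infinity>"
    and w_fin: "\<forall>i<p. \<forall>x\<in>X. w i x \<noteq> \<infinity>"
    and z_fin: "\<forall>j<q. \<forall>x\<in>X. z j x \<noteq> \<infinity>"
    and N_pos: "N \<ge> 1"
    and delta_def: "\<delta> = T / real N"
  shows "sup_dist X (W_op p w (mpfem_coeffs X U lc f \<phi> p w q z \<delta> N))
                     (S_op X U lc f T \<phi>)
         \<le> (1 + ereal (T / \<delta>)) *
            (SUP k\<in>{0..N}.
               sup_dist X (proj_Z X q z (S_op X U lc f (real k * \<delta>) \<phi>))
                          (S_op X U lc f (real k * \<delta>) \<phi>)
             + sup_dist X (proj_W X p w (S_op X U lc f (real k * \<delta>) \<phi>))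
                          (S_op X U lc f (real k * \<delta>) \<phi>))"
proof -
  have "0 < \<delta>"
    using T_pos N_pos by (simp add: delta_def)
  have "S_op X U lc f T \<phi> = S_op X U lc f (real N * \<delta>) \<phi>" "1 + ereal (T / \<delta>) = ereal (real (Suc N))"
    using T_pos N_pos by (simp_all add: delta_def)
  then show ?thesis
    using \<open>0 < \<delta>\<close> N_pos by (simp only:) (intro mpfem_error_bound SUP_upper; simp)
qed

end
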